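(* Let $\Gamma$ be a labeled graph. For a vertex $p$ of $\Gamma$, let $\Gamma-p$ be the labeled graph obtained by deleting $p$ and all edges incident to $p$ (the remaining vertices relabeled preserving their order). Then $$c_\Gamma=\sum_{p\text{ vertex of }\Gamma}(-1)^{\#\{\text{edges starting at }p\}}\,c_{\Gamma-p}.$$
   Context: A labeled graph with $V$ vertices and $E$ edges is a map $s:\{1,\ldots,E\}\to\mathcal{P}_2\{1,\ldots,V\}$. Each edge with $s(e)=\{i,j\}$, $i<j$, is oriented $i\to j$ (it starts at $i$). Define $c_\Gamma:=\sum_{\sigma\in S_V}\prod_{e:\,i\to j}\operatorname{sign}(\sigma(j)-\sigma(i))$; for the graph with one vertex and no edges, $c=1$. *)

theory Defs
  imports Main "HOL-Combinatorics.Permutations"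
begin

text \<open>A labeled graph with V vertices and E edges: a map s from edge labels {1..E}
  to 2-element subsets of {1..V}.  An edge with s e = {i,j}, i<j, is oriented i -> j.\<close>

definition labeled_graph :: "nat \<Rightarrow> nat \<Rightarrow> (nat \<Rightarrow> nat set) \<Rightarrow> bool" where
  "labeled_graph V E s \<longleftrightarrow> (\<forall>e\<in>{1..E}. s e \<subseteq> {1..V} \<and> card (s e) = 2)"

definition edge_src :: "nat set \<Rightarrow> nat" where
  "edge_src A = Min A"

definition edge_tgt :: "nat set \<Rightarrow> nat" where
  "edge_tgt A = Max A"

definition c_graph :: "nat \<Rightarrow> nat \<Rightarrow> (nat \<Rightarrow> nat set) \<Rightarrow> int" where
  "c_graph V E s =
     (\<Sum>\<sigma> \<in> {\<sigma>. \<sigma> permutes {1..V}}.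
        \<Prod>e\<in>{1..E}. sgn (int (\<sigma> (edge_tgt (s e))) - int (\<sigma> (edge_src (s e)))))"

definition out_deg :: "nat \<Rightarrow> (nat \<Rightarrow> nat set) \<Rightarrow> nat \<Rightarrow> nat" where
  "out_deg E s p = card {e\<in>{1..E}. p \<in> s e \<and> edge_src (s e) = p}"

text \<open>Deleting vertex p: remaining vertices relabeled order-preservingly,
  remaining edges (those not incident to p) relabeled order-preservingly.\<close>
definition vshift :: "nat \<Rightarrow> nat \<Rightarrow> nat" where
  "vshift p q = (if q < p then q else q - 1)"

definition kept_edges :: "nat \<Rightarrow> (nat \<Rightarrow> nat set) \<Rightarrow> nat \<Rightarrow> nat set" where
  "kept_edges E s p = {e\<in>{1..E}. p \<notin> s e}"

definition del_E :: "nat \<Rightarrow> (nat \<Rightarrow> nat set) \<Rightarrow> nat \<Rightarrow> nat" where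
  "del_E E s p = card (kept_edges E s p)"

definition del_s :: "nat \<Rightarrow> (nat \<Rightarrow> nat set) \<Rightarrow> nat \<Rightarrow> nat \<Rightarrow> nat set" where
  "del_s E s p k = vshift p ` s (sorted_list_of_set (kept_edges E s p) ! (k - 1))"

end

theory Submission
  imports Defs
begin

text \<open>Sort the permutations \<sigma> of the vertices by the vertex p that \<sigma> puts on top, \<sigma> p = V.
  Each such \<sigma> factors uniquely as \<pi> \<circ> move_top V p, where move_top V p sends p to V and
  the other vertices order-preservingly onto {1..V-1}, and \<pi> permutes {1..V-1}.  Since p
  is on top, an edge at p contributes -1 exactly when it starts at p, and the edges avoiding p
  contribute the factors of \<pi> for the graph with p deleted.\<close>

lemma sum_permutes_group_by_preimage:
  assumes "finite A" "b \<in> A"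
  shows "(\<Sum>\<sigma> | \<sigma> permutes A. f \<sigma>) = (\<Sum>a\<in>A. \<Sum>\<sigma> | \<sigma> permutes A \<and> \<sigma> a = b. f \<sigma>)"
proof -
  have "(\<lambda>\<sigma>. inv \<sigma> b) ` {\<sigma>. \<sigma> permutes A} \<subseteq> A"
    using assms(2) by (auto simp: permutes_in_image permutes_inv)
  then have "(\<Sum>\<sigma> | \<sigma> permutes A. f \<sigma>) = (\<Sum>a\<in>A. \<Sum>\<sigma> | \<sigma> permutes A \<and> inv \<sigma> b = a. f \<sigma>)"
    using sum.group[OF finite_permutations[OF assms(1)] assms(1), of "\<lambda>\<sigma>. inv \<sigma> b" f]
    by (simp add: conj_commute)
  then show ?thesis
    by (simp add: permutes_inv_eq cong: conj_cong)
qed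

lemma sum_permutes_fixed_value_reindex:
  assumes "d permutes A" "d a = b"
  shows "(\<Sum>\<sigma> | \<sigma> permutes A \<and> \<sigma> a = b. f \<sigma>) = (\<Sum>\<pi> | \<pi> permutes (A - {b}). f (\<pi> \<circ> d))"
proof (rule sum.reindex_bij_witness[where i = "\<lambda>\<pi>. \<pi> \<circ> d" and j = "\<lambda>\<sigma>. \<sigma> \<circ> inv d"])
  fix \<sigma> assume "\<sigma> \<in> {\<sigma>. \<sigma> permutes A \<and> \<sigma> a = b}"
  then have \<sigma>: "\<sigma> permutes A" "\<sigma> a = b" by auto
  show "\<sigma> \<circ> inv d \<circ> d = \<sigma>"
    by (simp add: comp_assoc permutes_inv_o[OF assms(1)])
  have "inv d b = a" using assms by (simp add: permutes_inv_eq)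
  moreover have "\<sigma> \<circ> inv d permutes A"
    using \<sigma>(1) assms(1) by (simp add: permutes_compose permutes_inv)
  ultimately show "\<sigma> \<circ> inv d \<in> {\<pi>. \<pi> permutes A - {b}}"
    using \<sigma>(2) by (auto elim!: permutes_superset)
next
  fix \<pi> assume "\<pi> \<in> {\<pi>. \<pi> permutes A - {b}}"
  then have \<pi>: "\<pi> permutes A - {b}" by simp
  show "\<pi> \<circ> d \<circ> inv d = \<pi>"
    by (simp add: comp_assoc permutes_inv_o[OF assms(1)])
  show "\<pi> \<circ> d \<in> {\<sigma>. \<sigma> permutes A \<and> \<sigma> a = b}"
    using permutes_compose[OF assms(1) permutes_subset[OF \<pi>]] permutes_not_in[OF \<pi>] assms
    by auto
qed (simp add: comp_assoc permutes_inv_o[OF assms(1)])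

definition orient_sign :: "nat \<Rightarrow> (nat \<Rightarrow> nat set) \<Rightarrow> (nat \<Rightarrow> nat) \<Rightarrow> int" where
  "orient_sign E s \<sigma> = (\<Prod>e\<in>{1..E}. sgn (int (\<sigma> (edge_tgt (s e))) - int (\<sigma> (edge_src (s e)))))"

lemma c_graph_eq_sum_orient_sign:
  "c_graph V E s = (\<Sum>\<sigma> | \<sigma> permutes {1..V}. orient_sign E s \<sigma>)"
  by (simp add: c_graph_def orient_sign_def)

lemma labeled_graph_edge:
  assumes "labeled_graph V E s" "e \<in> {1..E}"
  shows "x \<in> s e \<longleftrightarrow> x = edge_src (s e) \<or> x = edge_tgt (s e)"
    and "edge_src (s e) < edge_tgt (s e)" and "s e \<subseteq> {1..V}"
proof -
  have "card (s e) = 2" "s e \<subseteq> {1..V}"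
    using assms by (auto simp: labeled_graph_def)
  then obtain a b where "s e = {a, b}" "a < b"
    by (metis card_2_iff linorder_neqE_nat insert_commute)
  then show "x \<in> s e \<longleftrightarrow> x = edge_src (s e) \<or> x = edge_tgt (s e)"
    and "edge_src (s e) < edge_tgt (s e)"
    by (auto simp: edge_src_def edge_tgt_def)
  show "s e \<subseteq> {1..V}" by fact
qed

definition move_top :: "nat \<Rightarrow> nat \<Rightarrow> nat \<Rightarrow> nat" where
  "move_top V p q = (if q = p then V else if q \<in> {1..V} then vshift p q else q)"

lemma mono_vshift: "mono (vshift p)"
  by (auto simp: mono_def vshift_def)

lemma vshift_in_range:
  "p \<in> {1..V} \<Longrightarrow> q \<in> {1..V} \<Longrightarrow> q \<noteq> p \<Longrightarrow> vshift p q \<in> {1..V - 1}"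
  by (auto simp: vshift_def)

lemma move_top_permutes:
  assumes "p \<in> {1..V}"
  shows "move_top V p permutes {1..V}"
proof (rule bij_imp_permutes)
  have "inj_on (move_top V p) {1..V}"
    by (auto simp: inj_on_def move_top_def vshift_def split: if_splits)
  moreover have "move_top V p ` {1..V} \<subseteq> {1..V}"
    using assms by (auto simp: move_top_def vshift_def)
  ultimately show "bij_betw (move_top V p) {1..V} {1..V}"
    by (simp add: bij_betw_def endo_inj_surj)
qed (use assms in \<open>auto simp: move_top_def\<close>)

lemma prod_del_s:
  "(\<Prod>k\<in>{1..del_E E s p}. h (del_s E s p k)) = (\<Prod>e\<in>kept_edges E s p. h (vshift p ` s e))"
proof -
  let ?xs = "sorted_list_of_set (kept_edges E s p)"
  have fin: "finite (kept_edges E s p)" by (simp add: kept_edges_def)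
  then have "length ?xs = del_E E s p" by (simp add: del_E_def)
  then have "(\<Prod>k\<in>{1..del_E E s p}. h (del_s E s p k)) = (\<Prod>k<length ?xs. h (vshift p ` s (?xs ! k)))"
    by (simp add: del_s_def prod.atLeast1_atMost_eq)
  also have "\<dots> = prod_list (map (\<lambda>e. h (vshift p ` s e)) ?xs)"
    by (simp add: prod.list_conv_set_nth atLeast0LessThan)
  also have "\<dots> = (\<Prod>e\<in>kept_edges E s p. h (vshift p ` s e))"
    using fin prod.distinct_set_conv_list[of ?xs "\<lambda>e. h (vshift p ` s e)"] by simp
  finally show ?thesis .
qed

lemma comp_move_top_apply:
  assumes "p \<in> {1..V}" "\<pi> permutes {1..V - 1}"
  shows "(\<pi> \<circ> move_top V p) p = V"
    and "x \<in> {1..V} \<Longrightarrow> x \<noteq> p \<Longrightarrow> (\<pi> \<circ> move_top V p) x = \<pi> (vshift p x) \<and> \<pi> (vshift p x) < V"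
proof -
  have "V \<notin> {1..V - 1}" using assms(1) by auto
  then show "(\<pi> \<circ> move_top V p) p = V"
    using permutes_not_in[OF assms(2)] by (simp add: move_top_def)
next
  assume "x \<in> {1..V}" "x \<noteq> p"
  moreover have "\<pi> (vshift p x) \<in> {1..V - 1}"
    using vshift_in_range[OF assms(1) \<open>x \<in> {1..V}\<close> \<open>x \<noteq> p\<close>] permutes_in_image[OF assms(2)] by simp
  ultimately show "(\<pi> \<circ> move_top V p) x = \<pi> (vshift p x) \<and> \<pi> (vshift p x) < V"
    by (auto simp: move_top_def)
qed

lemma incident_edge_sign:
  assumes "labeled_graph V E s" "p \<in> {1..V}" "\<pi> permutes {1..V - 1}"
    and "e \<in> {1..E}" "p \<in> s e"
  defines "\<sigma> \<equiv> \<pi> \<circ> move_top V p"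
  shows "sgn (int (\<sigma> (edge_tgt (s e))) - int (\<sigma> (edge_src (s e)))) = (if edge_src (s e) = p then -1 else 1)"
proof -
  note edge = labeled_graph_edge[OF assms(1,4)]
  note top = comp_move_top_apply(1)[OF assms(2,3)]
  note below = comp_move_top_apply(2)[OF assms(2,3)]
  show ?thesis
  proof (cases "edge_src (s e) = p")
    case True
    then have "edge_tgt (s e) \<in> {1..V}" "edge_tgt (s e) \<noteq> p" using edge by auto
    then show ?thesis using True top below[of "edge_tgt (s e)"] unfolding \<sigma>_def by (simp add: sgn_if)
  next
    case False
    then have "edge_tgt (s e) = p" "edge_src (s e) \<in> {1..V}" using edge assms(5) by auto
    then show ?thesis using False top below[of "edge_src (s e)"] unfolding \<sigma>_def by (simp add: sgn_if)
  qed
qed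

lemma kept_edge_sign:
  assumes "labeled_graph V E s" "p \<in> {1..V}" "\<pi> permutes {1..V - 1}"
    and "e \<in> kept_edges E s p"
  defines "\<sigma> \<equiv> \<pi> \<circ> move_top V p"
  shows "sgn (int (\<sigma> (edge_tgt (s e))) - int (\<sigma> (edge_src (s e))))
       = sgn (int (\<pi> (edge_tgt (vshift p ` s e))) - int (\<pi> (edge_src (vshift p ` s e))))"
proof -
  have e: "e \<in> {1..E}" "p \<notin> s e" using assms(4) by (auto simp: kept_edges_def)
  note edge = labeled_graph_edge[OF assms(1) e(1)]
  have "finite (s e)" "s e \<noteq> {}"
    using edge(1)[of "edge_src (s e)"] finite_subset[OF edge(3)] by auto
  then have "edge_tgt (vshift p ` s e) = vshift p (edge_tgt (s e))"
    "edge_src (vshift p ` s e) = vshift p (edge_src (s e))"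
    by (simp_all add: edge_tgt_def edge_src_def mono_Max_commute mono_Min_commute mono_vshift)
  moreover have "edge_src (s e) \<in> {1..V} - {p}" "edge_tgt (s e) \<in> {1..V} - {p}"
    using edge e(2) by auto
  ultimately show ?thesis
    using comp_move_top_apply(2)[OF assms(2,3)] unfolding \<sigma>_def by simp
qed

lemma orient_sign_comp_move_top:
  assumes "labeled_graph V E s" "p \<in> {1..V}" "\<pi> permutes {1..V - 1}"
  shows "orient_sign E s (\<pi> \<circ> move_top V p)
       = (-1) ^ out_deg E s p * orient_sign (del_E E s p) (del_s E s p) \<pi>"
proof -
  let ?\<sigma> = "\<pi> \<circ> move_top V p"
  let ?g = "\<lambda>e. sgn (int (?\<sigma> (edge_tgt (s e))) - int (?\<sigma> (edge_src (s e))))"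
  let ?I = "{e\<in>{1..E}. p \<in> s e}"
  have split: "{1..E} = ?I \<union> kept_edges E s p"
    by (auto simp: kept_edges_def)
  have "orient_sign E s ?\<sigma> = prod ?g ?I * prod ?g (kept_edges E s p)"
    unfolding orient_sign_def by (subst split, rule prod.union_disjoint) (auto simp: kept_edges_def)
  also have "prod ?g ?I = (\<Prod>e\<in>?I. if edge_src (s e) = p then -1 else 1)"
    using incident_edge_sign[OF assms] by (intro prod.cong) auto
  also have "\<dots> = (-1) ^ out_deg E s p"
    by (simp add: prod.If_cases out_deg_def Int_def conj_ac)
  also have "prod ?g (kept_edges E s p)
      = (\<Prod>e\<in>kept_edges E s p. sgn (int (\<pi> (edge_tgt (vshift p ` s e))) - int (\<pi> (edge_src (vshift p ` s e)))))"
    using kept_edge_sign[OF assms] by (rule prod.cong[OF refl])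
  also have "\<dots> = orient_sign (del_E E s p) (del_s E s p) \<pi>"
    unfolding orient_sign_def by (rule prod_del_s[symmetric])
  finally show ?thesis .
qed

theorem mainTheorem10:
  fixes V E :: nat and s :: "nat \<Rightarrow> nat set"
  assumes "labeled_graph V E s" and "V \<ge> 1"
  shows "c_graph V E s =
    (\<Sum>p\<in>{1..V}. (-1) ^ out_deg E s p * c_graph (V - 1) (del_E E s p) (del_s E s p))"
proof -
  have top: "V \<in> {1..V}" "{1..V} - {V} = {1..V - 1}" using assms(2) by auto
  have "c_graph V E s = (\<Sum>p\<in>{1..V}. \<Sum>\<sigma> | \<sigma> permutes {1..V} \<and> \<sigma> p = V. orient_sign E s \<sigma>)"
    using sum_permutes_group_by_preimage[OF _ top(1)] by (simp add: c_graph_eq_sum_orient_sign)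
  also have "\<dots> = (\<Sum>p\<in>{1..V}. \<Sum>\<pi> | \<pi> permutes {1..V - 1}. orient_sign E s (\<pi> \<circ> move_top V p))"
  proof (rule sum.cong[OF refl])
    fix p assume p: "p \<in> {1..V}"
    have "move_top V p p = V" by (simp add: move_top_def)
    from sum_permutes_fixed_value_reindex[OF move_top_permutes[OF p] this]
    show "(\<Sum>\<sigma> | \<sigma> permutes {1..V} \<and> \<sigma> p = V. orient_sign E s \<sigma>)
        = (\<Sum>\<pi> | \<pi> permutes {1..V - 1}. orient_sign E s (\<pi> \<circ> move_top V p))"
      by (simp only: top(2))
  qed
  also have "\<dots> = (\<Sum>p\<in>{1..V}. (-1) ^ out_deg E s p * c_graph (V - 1) (del_E E s p) (del_s E s p))"
    using orient_sign_comp_move_top[OF assms(1)]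
    by (simp add: c_graph_eq_sum_orient_sign sum_distrib_left)
  finally show ?thesis .
qed

end
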